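(* Let $-\infty\le a<b\le\infty$, let $\kappa,\varphi:(a,b)\to\mathbb C$ be measurable with $\kappa\in L^2(a,b)$ and $\mathbb 1_{(a,c)}\varphi\in L^2(a,b)$ for every $c\in(a,b)$. Choose $c_0:=a<c_1<c_2<\dots<b$ with $\|\mathbb 1_{(c_n,b)}\kappa\|^2=2^{-n}\|\kappa\|^2$, $n\in\mathbb N$, and set $J_n=(c_{n-1},c_n)$, $\omega_n=\|\mathbb 1_{J_n}\kappa\|\cdot\|\mathbb 1_{J_n}\varphi\|$. Then \[ \lim_{n\to\infty}\omega_n=0\iff\lim_{t\nearrow b}\|\mathbb 1_{(a,t)}\varphi\|\cdot\|\mathbb 1_{(t,b)}\kappa\|=0 . \]
   Context: Norms are $L^2(a,b)$-norms; $\mathbb 1_E$ is the indicator function of $E$. *)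

theory Defs
  imports "HOL-Analysis.Analysis"
begin

definition L2norm :: "real set \<Rightarrow> (real \<Rightarrow> complex) \<Rightarrow> real" where
  "L2norm S f = sqrt (LINT x:S|lborel. (cmod (f x))^2)"

end

theory Submission
  imports Defs
begin

text \<open>Let \<open>P t\<close> and \<open>T t\<close> be the squared norms of \<open>\<phi>\<close> on \<open>(a, t)\<close> and of \<open>\<kappa>\<close> on \<open>(t, b)\<close>, so
  that \<open>T(c\<^sub>n) = 2\<^sup>-\<^sup>n \<parallel>\<kappa>\<parallel>\<^sup>2\<close> and \<open>\<omega>\<^sub>n\<^sup>2 = 2\<^sup>-\<^sup>n \<parallel>\<kappa>\<parallel>\<^sup>2 (P(c\<^sub>n) - P(c\<^sub>n\<^sub>-\<^sub>1))\<close>. For \<open>t\<close> in \<open>J\<^sub>n\<^sub>+\<^sub>1\<close>, monotonicity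
  gives \<open>P(t) T(t) \<le> P(c\<^sub>n\<^sub>+\<^sub>1) T(c\<^sub>n) = 2 \<Sum>\<^sub>k\<^sub>\<le>\<^sub>n\<^sub>+\<^sub>1 2\<^sup>k\<^sup>-\<^sup>n\<^sup>-\<^sup>1 \<omega>\<^sub>k\<^sup>2\<close>, a convolution of \<open>\<omega>\<^sup>2\<close> with a
  geometric sequence, which tends to 0 along with \<open>\<omega>\<close>. Conversely \<open>\<omega>\<^sub>n\<^sup>2 \<le> P(c\<^sub>n) T(c\<^sub>n)\<close>, and
  \<open>c\<^sub>n \<rightarrow> b\<close> unless the \<open>c\<^sub>n\<close> accumulate at some \<open>d < b\<close>; but then \<open>T\<close> vanishes beyond \<open>d\<close>
  and \<open>\<omega>\<^sub>n\<^sup>2 \<le> 2\<^sup>-\<^sup>n \<parallel>\<kappa>\<parallel>\<^sup>2 P(d) \<rightarrow> 0\<close> anyway.\<close>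

lemma linear_recurrence_bound:
  fixes q e :: real and s :: "nat \<Rightarrow> real"
  assumes q: "0 \<le> q" "q < 1" and "0 \<le> e"
    and step: "\<And>n. N \<le> n \<Longrightarrow> s (Suc n) \<le> q * s n + e"
    and "N \<le> n"
  shows "s n \<le> q ^ (n - N) * s N + e / (1 - q)"
  using \<open>N \<le> n\<close>
proof (induction n rule: dec_induct)
  case base
  have "0 \<le> e / (1 - q)" using \<open>0 \<le> e\<close> q by simp
  then show ?case by simp
next
  case (step m)
  have "q * s m \<le> q * (q ^ (m - N) * s N + e / (1 - q))"
    using step.IH q(1) by (rule mult_left_mono)
  then have "s (Suc m) \<le> q * (q ^ (m - N) * s N + e / (1 - q)) + e"
    using assms(4)[OF step.hyps(1)] by simp
  also have "\<dots> = q ^ (Suc m - N) * s N + e / (1 - q)"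
    using step.hyps q by (simp add: Suc_diff_le field_simps)
  finally show ?case .
qed

lemma tendsto_geometric_convolution_zero:
  fixes q :: real and w :: "nat \<Rightarrow> real"
  assumes q: "0 \<le> q" "q < 1" and w_nonneg: "\<And>n. 0 \<le> w n" and w: "w \<longlonglongrightarrow> 0"
  shows "(\<lambda>n. \<Sum>k\<le>n. q ^ (n - k) * w k) \<longlonglongrightarrow> 0"
proof -
  define s where "s n = (\<Sum>k\<le>n. q ^ (n - k) * w k)" for n
  have s_Suc: "s (Suc n) = q * s n + w (Suc n)" for n
  proof -
    have "(\<Sum>k\<le>n. q ^ (Suc n - k) * w k) = q * s n"
      unfolding s_def sum_distrib_left by (rule sum.cong) (auto simp: Suc_diff_le)
    then show ?thesis by (simp add: s_def)
  qed
  have s_nonneg: "0 \<le> s n" for n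
    unfolding s_def using q w_nonneg by (auto intro!: sum_nonneg)
  show ?thesis unfolding s_def[symmetric]
  proof (rule LIMSEQ_I)
    fix r :: real assume "0 < r"
    define e where "e = r * (1 - q) / 2"
    have e: "0 < e" using \<open>0 < r\<close> q by (simp add: e_def)
    from order_tendstoD(2)[OF w e] obtain N where N: "\<And>n. N \<le> n \<Longrightarrow> w n < e"
      unfolding eventually_sequentially by blast
    have s_bound: "s n \<le> q ^ (n - N) * s N + e / (1 - q)" if "N \<le> n" for n
      using q e s_Suc N that by (intro linear_recurrence_bound) (auto intro: less_imp_le)
    have "(\<lambda>n. q ^ n * s N) \<longlonglongrightarrow> 0"
      using q by (intro tendsto_mult_left_zero LIMSEQ_power_zero) auto
    from order_tendstoD(2)[OF this, of "r / 2"] \<open>0 < r\<close>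
    obtain M where M: "\<And>n. M \<le> n \<Longrightarrow> q ^ n * s N < r / 2"
      unfolding eventually_sequentially by auto
    show "\<exists>n0. \<forall>n\<ge>n0. norm (s n - 0) < r"
    proof (intro exI allI impI)
      fix n assume "N + M \<le> n"
      then have "s n \<le> q ^ (n - N) * s N + e / (1 - q)" "q ^ (n - N) * s N < r / 2"
        using s_bound M[of "n - N"] by auto
      moreover have "e / (1 - q) = r / 2" using q by (simp add: e_def field_simps)
      ultimately show "norm (s n - 0) < r" using s_nonneg[of n] by simp
    qed
  qed
qed

lemma tendsto_zero_iff_square_tendsto_zero:
  fixes f :: "'a \<Rightarrow> real"
  shows "(f \<longlongrightarrow> 0) F \<longleftrightarrow> ((\<lambda>x. (f x)\<^sup>2) \<longlongrightarrow> 0) F"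
proof
  assume "(f \<longlongrightarrow> 0) F"
  then show "((\<lambda>x. (f x)\<^sup>2) \<longlongrightarrow> 0) F" using tendsto_power[of f 0 F 2] by simp
next
  assume "((\<lambda>x. (f x)\<^sup>2) \<longlongrightarrow> 0) F"
  then have "((\<lambda>x. \<bar>f x\<bar>) \<longlongrightarrow> 0) F" using tendsto_real_sqrt by fastforce
  then show "(f \<longlongrightarrow> 0) F" by (simp add: tendsto_rabs_zero_iff)
qed

lemma set_integral_nonneg:
  fixes f :: "'a \<Rightarrow> real"
  assumes "\<And>x. x \<in> A \<Longrightarrow> 0 \<le> f x"
  shows "0 \<le> (LINT x:A|M. f x)"
  unfolding set_lebesgue_integral_def using assms
  by (intro integral_nonneg_AE) (auto simp: indicator_def)

lemma set_integral_mono_set: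
  fixes f :: "'a \<Rightarrow> real"
  assumes "set_integrable M B f" "A \<in> sets M" "A \<subseteq> B" "\<And>x. x \<in> B \<Longrightarrow> 0 \<le> f x"
  shows "(LINT x:A|M. f x) \<le> (LINT x:B|M. f x)"
proof -
  have "set_integrable M A f" by (rule set_integrable_subset[OF assms(1-3)])
  with assms show ?thesis
    unfolding set_lebesgue_integral_def set_integrable_def
    by (intro integral_mono) (auto simp: indicator_def)
qed

lemma set_integrable_einterval_subset:
  fixes u v x y :: ereal and f :: "real \<Rightarrow> 'b::{banach, second_countable_topology}"
  assumes "set_integrable lborel (einterval u v) f" "u \<le> x" "y \<le> v"
  shows "set_integrable lborel (einterval x y) f"
  by (rule set_integrable_subset[OF assms(1)]) (use assms in \<open>auto simp: einterval_def\<close>)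

lemma set_integral_einterval_split:
  fixes x y z :: ereal and f :: "real \<Rightarrow> real"
  assumes "x \<le> y" "y \<le> z" "set_integrable lborel (einterval x z) f"
  shows "(LINT t:einterval x z|lborel. f t)
           = (LINT t:einterval x y|lborel. f t) + (LINT t:einterval y z|lborel. f t)"
  using interval_integral_sum[of x y z f] assms order_trans[OF assms(1,2)]
  by (simp add: interval_lebesgue_integrable_def interval_lebesgue_integral_def min_def max_def)

text \<open>In the application \<open>p n\<close> is the squared norm of \<open>\<phi>\<close> on \<open>(c n, c (Suc n))\<close> and \<open>K = \<parallel>\<kappa>\<parallel>\<^sup>2\<close>;
  with this indexing \<open>omega_sq n\<close> is \<open>\<omega>\<^sub>n\<^sub>+\<^sub>1\<^sup>2\<close>.\<close>

locale halving_partition =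
  fixes b :: ereal and c :: "nat \<Rightarrow> ereal"
    and P T :: "ereal \<Rightarrow> real" and p :: "nat \<Rightarrow> real" and K :: real
  assumes mono_c: "mono c"
    and c_less: "\<And>n. c n < b"
    and P_nonneg: "\<And>t. 0 \<le> P t"
    and T_nonneg: "\<And>t. 0 \<le> T t"
    and p_nonneg: "\<And>n. 0 \<le> p n"
    and P_mono: "\<And>s t. c 0 \<le> s \<Longrightarrow> s \<le> t \<Longrightarrow> t < b \<Longrightarrow> P s \<le> P t"
    and T_antimono: "\<And>s t. c 0 \<le> s \<Longrightarrow> s \<le> t \<Longrightarrow> t < b \<Longrightarrow> T t \<le> T s"
    and P_c: "\<And>n. P (c (Suc n)) = (\<Sum>k\<le>n. p k)"
    and T_c: "\<And>n. T (c n) = (1/2) ^ n * K"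
begin

definition omega_sq :: "nat \<Rightarrow> real" where
  "omega_sq n = (1/2) ^ Suc n * K * p n"

lemma K_nonneg: "0 \<le> K"
  using T_nonneg[of "c 0"] by (simp add: T_c)

lemma omega_sq_nonneg: "0 \<le> omega_sq n"
  unfolding omega_sq_def using K_nonneg p_nonneg by simp

lemma c_ge_c0: "c 0 \<le> c n"
  using mono_c by (simp add: mono_def)

lemma T_le: "c n \<le> t \<Longrightarrow> t < b \<Longrightarrow> T t \<le> (1/2) ^ n * K"
  using T_antimono[OF c_ge_c0] by (simp add: T_c)

lemma T_eq_0_beyond_c:
  assumes "\<And>n. c n \<le> t" "t < b"
  shows "T t = 0"
proof -
  have "T t \<le> 0"
  proof (rule LIMSEQ_le_const)
    show "(\<lambda>n. (1/2::real) ^ n * K) \<longlonglongrightarrow> 0"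
      by (intro tendsto_mult_left_zero LIMSEQ_power_zero) simp
    show "\<exists>N. \<forall>n\<ge>N. T t \<le> (1/2) ^ n * K"
      using T_le assms by blast
  qed
  with T_nonneg[of t] show ?thesis by simp
qed

lemma product_le_convolution:
  assumes "c n \<le> t" "t \<le> c (Suc n)" "t < b"
  shows "P t * T t \<le> 2 * (\<Sum>k\<le>n. (1/2) ^ (n - k) * omega_sq k)"
proof -
  have "P t * T t \<le> P (c (Suc n)) * ((1/2) ^ n * K)"
    using assms c_ge_c0[of n] c_less[of "Suc n"] P_nonneg T_nonneg
    by (intro mult_mono P_mono T_le) (auto intro: order_trans)
  also have "\<dots> = (\<Sum>k\<le>n. 2 * ((1/2) ^ (n - k) * omega_sq k))"
    unfolding P_c sum_distrib_right
  proof (rule sum.cong[OF refl])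
    fix k assume "k \<in> {..n}"
    then have "(1/2::real) ^ n = (1/2) ^ (n - k) * (1/2) ^ k"
      by (simp flip: power_add)
    then show "p k * ((1/2) ^ n * K) = 2 * ((1/2) ^ (n - k) * omega_sq k)"
      by (simp add: omega_sq_def)
  qed
  finally show ?thesis by (simp add: sum_distrib_left)
qed

lemma omega_sq_le_product: "omega_sq n \<le> P (c (Suc n)) * T (c (Suc n))"
proof -
  have "p n \<le> P (c (Suc n))"
    unfolding P_c using p_nonneg by (intro member_le_sum) auto
  then have "(1/2) ^ Suc n * K * p n \<le> (1/2) ^ Suc n * K * P (c (Suc n))"
    using K_nonneg by (intro mult_left_mono) auto
  then show ?thesis
    unfolding omega_sq_def T_c by (simp add: mult.commute)
qed

lemma product_tendsto_zero:
  assumes "omega_sq \<longlonglongrightarrow> 0"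
  shows "((\<lambda>t. P t * T t) \<longlongrightarrow> 0) (at_left b)"
proof (rule tendstoI)
  fix e :: real assume "0 < e"
  define s where "s n = 2 * (\<Sum>k\<le>n. (1/2) ^ (n - k) * omega_sq k)" for n
  have "s \<longlonglongrightarrow> 0"
    unfolding s_def using omega_sq_nonneg assms
    by (intro tendsto_mult_right_zero tendsto_geometric_convolution_zero) auto
  from order_tendstoD(2)[OF this \<open>0 < e\<close>] obtain N where N: "\<And>n. N \<le> n \<Longrightarrow> s n < e"
    unfolding eventually_sequentially by blast
  show "\<forall>\<^sub>F t in at_left b. dist (P t * T t) 0 < e"
    unfolding eventually_at_left[OF c_less[of N]]
  proof (intro exI[of _ "c N"] conjI allI impI)
    fix t assume t: "c N < t" "t < b"
    have "P t * T t < e"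
    proof (cases "\<exists>m. t < c m")
      case True
      then obtain m where "t < c (N + m)"
        using mono_c by (meson le_add2 less_le_trans monoD)
      moreover have "\<not> t < c (N + 0)" using t by simp
      ultimately obtain n where "\<not> t < c (N + n)" "t < c (N + Suc n)"
        using exists_least_lemma[of "\<lambda>n. t < c (N + n)"] by blast
      then have "P t * T t \<le> s (N + n)"
        unfolding s_def using t by (intro product_le_convolution) auto
      with N[of "N + n"] show ?thesis by simp
    next
      case False
      then have "T t = 0" using t by (intro T_eq_0_beyond_c) (auto simp: not_less)
      with \<open>0 < e\<close> show ?thesis by simp
    qed
    then show "dist (P t * T t) 0 < e" using P_nonneg[of t] T_nonneg[of t] by simp
  qed (use c_less in auto)
qed

lemma omega_sq_tendsto_zero:
  assumes "((\<lambda>t. P t * T t) \<longlongrightarrow> 0) (at_left b)"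
  shows "omega_sq \<longlonglongrightarrow> 0"
proof (rule tendsto_sandwich[of "\<lambda>_. 0" _ _ "\<lambda>n. P (c (Suc n)) * T (c (Suc n))"])
  show "(\<lambda>n. P (c (Suc n)) * T (c (Suc n))) \<longlonglongrightarrow> 0"
  proof (cases "(SUP n. c n) = b")
    case True
    then have "c \<longlonglongrightarrow> b" using LIMSEQ_SUP[OF mono_c] by simp
    then have "filterlim (\<lambda>n. c (Suc n)) (at_left b) sequentially"
      by (intro tendsto_imp_filterlim_at_left LIMSEQ_Suc) (auto simp: c_less)
    with assms show ?thesis by (rule filterlim_compose)
  next
    case False
    define d where "d = (SUP n. c n)"
    have "d \<le> b"
      unfolding d_def using c_less by (intro SUP_least less_imp_le)
    with False have "d < b" by (simp add: d_def)
    have c_le_d: "c n \<le> d" for n unfolding d_def by (rule SUP_upper) simp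
    have bound: "P (c (Suc n)) * T (c (Suc n)) \<le> (1/2) ^ Suc n * K * P d" for n
    proof -
      have "P (c (Suc n)) * T (c (Suc n)) \<le> P d * T (c (Suc n))"
        using P_mono[OF c_ge_c0 c_le_d \<open>d < b\<close>] T_nonneg by (rule mult_right_mono)
      then show ?thesis by (simp add: T_c mult.commute)
    qed
    show ?thesis
    proof (rule tendsto_sandwich[of "\<lambda>_. 0" _ _ "\<lambda>n. (1/2) ^ Suc n * K * P d"])
      show "(\<lambda>n. (1/2::real) ^ Suc n * K * P d) \<longlonglongrightarrow> 0"
        by (intro tendsto_mult_left_zero LIMSEQ_Suc LIMSEQ_power_zero) simp
    qed (use bound P_nonneg T_nonneg in \<open>auto intro!: always_eventually\<close>)
  qed
qed (use omega_sq_nonneg omega_sq_le_product in auto)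

lemma omega_sq_tendsto_zero_iff:
  "omega_sq \<longlonglongrightarrow> 0 \<longleftrightarrow> ((\<lambda>t. P t * T t) \<longlongrightarrow> 0) (at_left b)"
  using product_tendsto_zero omega_sq_tendsto_zero by blast

end

lemma L2norm_squared: "(L2norm S f)\<^sup>2 = (LINT x:S|lborel. (cmod (f x))\<^sup>2)"
  unfolding L2norm_def by (rule real_sqrt_pow2, rule set_integral_nonneg) simp

lemma L2norm_squared_einterval_split:
  fixes x y z :: ereal
  assumes "x \<le> y" "y \<le> z" "set_integrable lborel (einterval x z) (\<lambda>t. (cmod (f t))\<^sup>2)"
  shows "(L2norm (einterval x z) f)\<^sup>2 = (L2norm (einterval x y) f)\<^sup>2 + (L2norm (einterval y z) f)\<^sup>2"
  unfolding L2norm_squared by (rule set_integral_einterval_split[OF assms])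

lemma L2norm_squared_einterval_mono:
  fixes u v x y :: ereal
  assumes "set_integrable lborel (einterval u v) (\<lambda>t. (cmod (f t))\<^sup>2)" "u \<le> x" "y \<le> v"
  shows "(L2norm (einterval x y) f)\<^sup>2 \<le> (L2norm (einterval u v) f)\<^sup>2"
  unfolding L2norm_squared
  by (rule set_integral_mono_set[OF assms(1)]) (use assms in \<open>auto simp: einterval_def\<close>)

lemma halving_partition_L2norm:
  fixes a b :: ereal and \<kappa> \<phi> :: "real \<Rightarrow> complex" and c :: "nat \<Rightarrow> ereal"
  assumes kappa_L2: "set_integrable lborel (einterval a b) (\<lambda>x. (cmod (\<kappa> x))\<^sup>2)"
    and phi_L2: "\<And>t::real. a < ereal t \<Longrightarrow> ereal t < b \<Longrightarrow>
                   set_integrable lborel (einterval a (ereal t)) (\<lambda>x. (cmod (\<phi> x))\<^sup>2)"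
    and c0: "c 0 = a" and mono_c: "mono c" and c_less: "\<And>n. c n < b"
    and c_tail: "\<And>n. (L2norm (einterval (c n) b) \<kappa>)\<^sup>2 = (1/2) ^ n * (L2norm (einterval a b) \<kappa>)\<^sup>2"
  shows "halving_partition b c (\<lambda>t. (L2norm (einterval a t) \<phi>)\<^sup>2) (\<lambda>t. (L2norm (einterval t b) \<kappa>)\<^sup>2)
           (\<lambda>n. (L2norm (einterval (c n) (c (Suc n))) \<phi>)\<^sup>2) ((L2norm (einterval a b) \<kappa>)\<^sup>2)"
proof unfold_locales
  have phi_integrable: "set_integrable lborel (einterval a t) (\<lambda>x. (cmod (\<phi> x))\<^sup>2)" if "t < b" for t
  proof (cases "a < t")
    case True
    with that show ?thesis using phi_L2 by (cases t) auto
  next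
    case False
    then have "einterval a t = {}" by (auto simp: einterval_def)
    then show ?thesis by (simp add: set_integrable_def)
  qed
  have a_le_c: "a \<le> c n" for n
    using mono_c c0 by (metis monoD zero_le)
  show "(L2norm (einterval a s) \<phi>)\<^sup>2 \<le> (L2norm (einterval a t) \<phi>)\<^sup>2" if "c 0 \<le> s" "s \<le> t" "t < b" for s t
    using phi_integrable[OF \<open>t < b\<close>] \<open>s \<le> t\<close> by (rule L2norm_squared_einterval_mono[OF _ order_refl])
  show "(L2norm (einterval t b) \<kappa>)\<^sup>2 \<le> (L2norm (einterval s b) \<kappa>)\<^sup>2" if "c 0 \<le> s" "s \<le> t" "t < b" for s t
    using set_integrable_einterval_subset[OF kappa_L2, of s b] that c0
    by (intro L2norm_squared_einterval_mono) auto
  show "(L2norm (einterval a (c (Suc n))) \<phi>)\<^sup>2 = (\<Sum>k\<le>n. (L2norm (einterval (c k) (c (Suc k))) \<phi>)\<^sup>2)" for n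
  proof (induction n)
    case 0
    then show ?case using c0 by simp
  next
    case (Suc n)
    have "(L2norm (einterval a (c (Suc (Suc n)))) \<phi>)\<^sup>2
        = (L2norm (einterval a (c (Suc n))) \<phi>)\<^sup>2 + (L2norm (einterval (c (Suc n)) (c (Suc (Suc n)))) \<phi>)\<^sup>2"
      using a_le_c mono_c phi_integrable[OF c_less]
      by (intro L2norm_squared_einterval_split) (auto simp: monoD)
    with Suc.IH show ?case by simp
  qed
qed (use mono_c c_less c_tail in simp_all)

theorem lemma3p2:
  fixes a b :: ereal and \<kappa> \<phi> :: "real \<Rightarrow> complex" and c :: "nat \<Rightarrow> ereal"
  assumes ab: "a < b"
    and meas_kappa: "set_borel_measurable lborel (einterval a b) \<kappa>"
    and meas_phi: "set_borel_measurable lborel (einterval a b) \<phi>"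
    and kappa_L2: "set_integrable lborel (einterval a b) (\<lambda>x. (cmod (\<kappa> x))^2)"
    and phi_L2: "\<And>t::real. a < ereal t \<Longrightarrow> ereal t < b \<Longrightarrow>
                   set_integrable lborel (einterval a (ereal t)) (\<lambda>x. (cmod (\<phi> x))^2)"
    and c0: "c 0 = a"
    and c_mono: "strict_mono c"
    and c_lt_b: "\<And>n. c n < b"
    and c_tail: "\<And>n. (L2norm (einterval (c n) b) \<kappa>)^2 = (1/2)^n * (L2norm (einterval a b) \<kappa>)^2"
  shows "((\<lambda>n. L2norm (einterval (c n) (c (Suc n))) \<kappa> * L2norm (einterval (c n) (c (Suc n))) \<phi>)
            \<longlonglongrightarrow> 0)
         \<longleftrightarrow> ((\<lambda>t. L2norm (einterval a t) \<phi> * L2norm (einterval t b) \<kappa>) \<longlongrightarrow> 0) (at_left b)"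
proof -
  interpret halving_partition b c "\<lambda>t. (L2norm (einterval a t) \<phi>)\<^sup>2" "\<lambda>t. (L2norm (einterval t b) \<kappa>)\<^sup>2"
      "\<lambda>n. (L2norm (einterval (c n) (c (Suc n))) \<phi>)\<^sup>2" "(L2norm (einterval a b) \<kappa>)\<^sup>2"
    using kappa_L2 phi_L2 c0 strict_mono_mono[OF c_mono] c_lt_b c_tail by (rule halving_partition_L2norm)
  have kappa_segment: "(L2norm (einterval (c n) (c (Suc n))) \<kappa>)\<^sup>2 = (1/2) ^ Suc n * (L2norm (einterval a b) \<kappa>)\<^sup>2" for n
  proof -
    have "(L2norm (einterval (c n) b) \<kappa>)\<^sup>2
        = (L2norm (einterval (c n) (c (Suc n))) \<kappa>)\<^sup>2 + (L2norm (einterval (c (Suc n)) b) \<kappa>)\<^sup>2"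
      using set_integrable_einterval_subset[OF kappa_L2, of "c n" b] c_ge_c0[of n] c0 mono_c c_lt_b
      by (intro L2norm_squared_einterval_split) (auto simp: monoD less_imp_le)
    then show ?thesis using c_tail[of n] c_tail[of "Suc n"] by simp
  qed
  define \<omega> where "\<omega> = (\<lambda>n. L2norm (einterval (c n) (c (Suc n))) \<kappa> * L2norm (einterval (c n) (c (Suc n))) \<phi>)"
  define \<rho> where "\<rho> = (\<lambda>t. L2norm (einterval a t) \<phi> * L2norm (einterval t b) \<kappa>)"
  have "(\<lambda>n. (\<omega> n)\<^sup>2) = omega_sq"
    by (rule ext) (simp add: \<omega>_def omega_sq_def power_mult_distrib kappa_segment)
  then have "\<omega> \<longlonglongrightarrow> 0 \<longleftrightarrow> omega_sq \<longlonglongrightarrow> 0"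
    using tendsto_zero_iff_square_tendsto_zero[of \<omega>] by simp
  also have "\<dots> \<longleftrightarrow> ((\<lambda>t. (L2norm (einterval a t) \<phi>)\<^sup>2 * (L2norm (einterval t b) \<kappa>)\<^sup>2) \<longlongrightarrow> 0) (at_left b)"
    by (rule omega_sq_tendsto_zero_iff)
  also have "\<dots> \<longleftrightarrow> (\<rho> \<longlongrightarrow> 0) (at_left b)"
    using tendsto_zero_iff_square_tendsto_zero[of \<rho>] by (simp add: \<rho>_def power_mult_distrib)
  finally show ?thesis unfolding \<omega>_def \<rho>_def .
qed

end
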